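(* For every state $n\in\mathbb{N}$ of the transducer $\mathcal{D}_{p/q}$ and every letter $b\in A_q$, there exist a unique state $m\in\mathbb{N}$ and a unique letter $c\in A_q$ such that $n\xrightarrow{b|c} m$ is a transition of $\mathcal{D}_{p/q}$.
   Context: Let $p>q>1$ be coprime integers, $A_q=\{0,1,\dots,q-1\}$ and $B=\{p-(2q-1),\dots,p-1\}$ (a set of integers, possibly containing negative ones). For $n\in\mathbb{N}$ and $a\in\mathbb{Z}$, let $\tau(n,a)=\frac{np+a}{q}$, defined only when $q$ divides $np+a$. For $a\in B$ let $\omega(a)=\{(b,c)\in A_q\times A_q : c-b=a-(p-q)\}$. The transducer $\mathcal{D}_{p/q}$ has state set $\mathbb{N}$, input and output alphabet $A_q$, initial state $0$, all states final, and has a transition $n\xrightarrow{b|c}\tau(n,a)$ (input $b$, output $c$) for every $n\in\mathbb{N}$, every $a\in B$ such that $\tau(n,a)$ is defined, and every $(b,c)\in\omega(a)$; it has no other transitions. *)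

theory Defs
  imports Main
begin

definition A_alph :: "int \<Rightarrow> int set" where
  "A_alph q = {0..q-1}"

definition B_set :: "int \<Rightarrow> int \<Rightarrow> int set" where
  "B_set p q = {p - (2*q - 1)..p - 1}"

definition omega :: "int \<Rightarrow> int \<Rightarrow> int \<Rightarrow> (int \<times> int) set" where
  "omega p q a = {(b, c). b \<in> A_alph q \<and> c \<in> A_alph q \<and> c - b = a - (p - q)}"

definition trans_D :: "int \<Rightarrow> int \<Rightarrow> nat \<Rightarrow> int \<Rightarrow> int \<Rightarrow> nat \<Rightarrow> bool" where
  "trans_D p q n b c m \<longleftrightarrow>
     (\<exists>a \<in> B_set p q. q dvd (int n * p + a) \<and>
        int m = (int n * p + a) div q \<and> (b, c) \<in> omega p q a)"

end

theory Submission
  imports Defs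
begin

text \<open>Reading an edge n --b|c--> m backwards, its letter is forced to be a = c - b + (p - q),
  which lies in B for all digits b, c. So the edge exists iff q m = n p + a, i.e. iff
  c \<equiv> b - (n + 1) p (mod q) and m = (n p + a)/q; for a digit c this pins down c, and
  m \<ge> 0 comes for free from p > q.\<close>

lemma ex1_nat_quotient_with_digit:
  fixes q x :: int
  assumes "q > 0" and "x > - q"
  shows "\<exists>!(m, c). c \<in> A_alph q \<and> q * int m = x + c"
proof (rule ex1I[where a = "(nat (- ((- x) div q)), (- x) mod q)"], clarify)
  have "(- x) div q \<le> (q - 1) div q"
    using assms by (intro zdiv_mono1) simp_all
  then have "(- x) div q \<le> 0"
    using assms(1) by simp
  moreover have "x + (- x) mod q = q * (- ((- x) div q))"
    using mult_div_mod_eq[of q "- x"] by linarith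
  ultimately show "(- x) mod q \<in> A_alph q \<and> q * int (nat (- ((- x) div q))) = x + (- x) mod q"
    using assms(1) by (simp add: A_alph_def)
next
  fix mc :: "nat \<times> int"
  assume "case mc of (m, c) \<Rightarrow> c \<in> A_alph q \<and> q * int m = x + c"
  then obtain m c where mc: "mc = (m, c)" and c: "0 \<le> c" "c < q" and eq: "q * int m = x + c"
    by (auto simp: A_alph_def)
  have neg_x: "- x = c + q * (- int m)"
    using eq by simp
  have "c = (- x) mod q"
    unfolding neg_x mod_mult_self2 using c by simp
  moreover have "int m = - ((- x) div q)"
    unfolding neg_x div_mult_self2[OF less_imp_neq[OF assms(1), symmetric]] using c by simp
  ultimately show "mc = (nat (- ((- x) div q)), (- x) mod q)"
    using mc by simp
qed

lemma edge_label_in_B: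
  assumes "b \<in> A_alph q" and "c \<in> A_alph q"
  shows "c - b + (p - q) \<in> B_set p q"
  using assms by (simp add: A_alph_def B_set_def)

lemma trans_D_iff:
  fixes p q :: int
  assumes "q > 0" and "b \<in> A_alph q"
  shows "trans_D p q n b c m \<longleftrightarrow>
           c \<in> A_alph q \<and> q * int m = (int n * p + p - q - b) + c"
proof
  assume "trans_D p q n b c m"
  then obtain a where "q dvd (int n * p + a)" and "int m = (int n * p + a) div q"
    and "(b, c) \<in> omega p q a"
    by (auto simp: trans_D_def)
  then show "c \<in> A_alph q \<and> q * int m = (int n * p + p - q - b) + c"
    by (auto simp: omega_def algebra_simps)
next
  assume c: "c \<in> A_alph q \<and> q * int m = (int n * p + p - q - b) + c"
  let ?a = "c - b + (p - q)"
  have "int n * p + ?a = q * int m"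
    using c by simp
  then have "q dvd (int n * p + ?a)" and "int m = (int n * p + ?a) div q"
    using assms(1) by simp_all
  moreover have "?a \<in> B_set p q" and "(b, c) \<in> omega p q ?a"
    using assms(2) c by (simp_all add: edge_label_in_B omega_def)
  ultimately show "trans_D p q n b c m"
    unfolding trans_D_def by blast
qed

theorem mainTheorem1:
  fixes p q :: int
  assumes "p > q" and "q > 1" and "coprime p q"
  shows "\<forall>(n::nat). \<forall>b \<in> A_alph q.
           \<exists>!(m, c). c \<in> A_alph q \<and> trans_D p q n b c m"
proof (intro allI ballI)
  fix n :: nat and b
  assume b: "b \<in> A_alph q"
  have "int n * p + p - q - b > - q"
    using assms(1) b by (simp add: A_alph_def add_strict_increasing2)
  then have "\<exists>!(m, c). c \<in> A_alph q \<and> q * int m = (int n * p + p - q - b) + c"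
    using assms(2) by (intro ex1_nat_quotient_with_digit) simp_all
  then show "\<exists>!(m, c). c \<in> A_alph q \<and> trans_D p q n b c m"
    using trans_D_iff[OF _ b, of p n] assms(2) by simp
qed

end
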